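(* Let $G'=(V',E')$ be a subgraph of a graph $G=(V,E)$, let $\alpha$ and $\beta$ be two $k$-colorings of $G$, and let $\alpha'=\alpha|_{V'}$ and $\beta'=\beta|_{V'}$. Let $T'\subseteq V'$ and $T\subseteq V$. If the $\alpha'$-node and the $\beta'$-node of $\mathcal{C}^c_k(G',T')$ lie in different components, then the $\alpha$-node and the $\beta$-node of $\mathcal{C}^c_k(G,T)$ lie in different components.
   Context: A $k$-coloring of $G$ is a map $\alpha:V(G)\to\{1,\dots,k\}$ with $\alpha(u)\ne\alpha(v)$ for every edge $uv$. $\mathcal{C}_k(G)$ has the $k$-colorings as nodes, adjacent iff they differ on exactly one vertex. For $T\subseteq V(G)$, label each coloring $\gamma$ by $\gamma|_T$. A label component is a maximal set of colorings with the same label inducing a connected subgraph of $\mathcal{C}_k(G)$. The contracted solution graph $\mathcal{C}^c_k(G,T)=(H,\ell)$ has one node $x$ per label component $S_x$, distinct $x,y$ adjacent iff some $\gamma\in S_x,\gamma'\in S_y$ are adjacent in $\mathcal{C}_k(G)$, and $\ell(x)$ the common label on $S_x$. A certificate is an assignment of nonempty sets $S_x$ of $k$-colorings of $G$ to the nodes $x$ of $H$ such that: the $S_x$ partition the $k$-colorings; $\gamma|_T=\ell(x)$ for $\gamma\in S_x$; adjacent nodes have distinct labels; each $S_x$ induces a connected subgraph of $\mathcal{C}_k(G)$; distinct $x,y$ are adjacent iff some $\gamma\in S_x$ and $\gamma'\in S_y$ are adjacent in $\mathcal{C}_k(G)$. For a fixed certificate, the $\gamma$-node is the node $x$ with $\gamma\in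 S_x$; when several $\gamma$-nodes in one graph are considered they are taken with respect to the same certificate. *)

theory Defs
  imports "HOL-Library.FuncSet"
begin

definition graph :: "'v set \<Rightarrow> 'v set set \<Rightarrow> bool" where
  "graph V E \<longleftrightarrow> finite V \<and> (\<forall>e\<in>E. e \<subseteq> V \<and> card e = 2)"

definition subgraph :: "'v set \<Rightarrow> 'v set set \<Rightarrow> 'v set \<Rightarrow> 'v set set \<Rightarrow> bool" where
  "subgraph V' E' V E \<longleftrightarrow> graph V' E' \<and> graph V E \<and> V' \<subseteq> V \<and> E' \<subseteq> E"

definition colorings :: "'v set \<Rightarrow> 'v set set \<Rightarrow> nat \<Rightarrow> ('v \<Rightarrow> nat) set" where
  "colorings V E k = {\<alpha> \<in> V \<rightarrow>\<^sub>E {1..k}. \<forall>e\<in>E. \<forall>u\<in>e. \<forall>v\<in>e. u \<noteq> v \<longrightarrow> \<alpha> u \<noteq> \<alpha> v}"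

text \<open>Adjacency in the reconfiguration graph C_k(G): differ on exactly one vertex.\<close>
definition recol_adj :: "'v set \<Rightarrow> ('v \<Rightarrow> nat) \<Rightarrow> ('v \<Rightarrow> nat) \<Rightarrow> bool" where
  "recol_adj V \<alpha> \<beta> \<longleftrightarrow> card {v \<in> V. \<alpha> v \<noteq> \<beta> v} = 1"

definition induces_connected :: "('a \<Rightarrow> 'a \<Rightarrow> bool) \<Rightarrow> 'a set \<Rightarrow> bool" where
  "induces_connected R S \<longleftrightarrow>
     (\<forall>x\<in>S. \<forall>y\<in>S. (x, y) \<in> {(a, b). a \<in> S \<and> b \<in> S \<and> R a b}\<^sup>*)"

definition label_connected_set ::
    "'v set \<Rightarrow> 'v set set \<Rightarrow> nat \<Rightarrow> 'v set \<Rightarrow> ('v \<Rightarrow> nat) set \<Rightarrow> bool" where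
  "label_connected_set V E k T S \<longleftrightarrow>
     S \<noteq> {} \<and> S \<subseteq> colorings V E k \<and>
     (\<exists>L. \<forall>\<gamma>\<in>S. restrict \<gamma> T = L) \<and>
     induces_connected (recol_adj V) S"

text \<open>Label components: maximal such sets.  They are the nodes of the contracted
  solution graph C^c_k(G,T).\<close>
definition label_components ::
    "'v set \<Rightarrow> 'v set set \<Rightarrow> nat \<Rightarrow> 'v set \<Rightarrow> ('v \<Rightarrow> nat) set set" where
  "label_components V E k T =
     {S. label_connected_set V E k T S \<and>
         (\<forall>S'. label_connected_set V E k T S' \<and> S \<subseteq> S' \<longrightarrow> S' = S)}"

definition contracted_adj ::
    "'v set \<Rightarrow> 'v set set \<Rightarrow> nat \<Rightarrow> 'v set \<Rightarrow> ('v \<Rightarrow> nat) set \<Rightarrow> ('v \<Rightarrow> nat) set \<Rightarrow> bool" where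
  "contracted_adj V E k T x y \<longleftrightarrow>
     x \<in> label_components V E k T \<and> y \<in> label_components V E k T \<and> x \<noteq> y \<and>
     (\<exists>\<gamma>\<in>x. \<exists>\<gamma>'\<in>y. recol_adj V \<gamma> \<gamma>')"

definition contracted_label ::
    "'v set \<Rightarrow> ('v \<Rightarrow> nat) set \<Rightarrow> ('v \<Rightarrow> nat)" where
  "contracted_label T x = (THE L. \<forall>\<gamma>\<in>x. restrict \<gamma> T = L)"

definition node_of ::
    "'v set \<Rightarrow> 'v set set \<Rightarrow> nat \<Rightarrow> 'v set \<Rightarrow> ('v \<Rightarrow> nat) \<Rightarrow> ('v \<Rightarrow> nat) set" where
  "node_of V E k T \<gamma> = (THE x. x \<in> label_components V E k T \<and> \<gamma> \<in> x)"

definition same_component ::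
    "'v set \<Rightarrow> 'v set set \<Rightarrow> nat \<Rightarrow> 'v set \<Rightarrow> ('v \<Rightarrow> nat) set \<Rightarrow> ('v \<Rightarrow> nat) set \<Rightarrow> bool" where
  "same_component V E k T x y \<longleftrightarrow>
     (x, y) \<in> {(a, b). contracted_adj V E k T a b}\<^sup>*"

end

theory Submission
  imports Defs
begin

text \<open>Whatever the labelling set T, two nodes of the contracted solution graph lie in the
  same component exactly when their colorings are connected in the reconfiguration graph:
  each label component is connected in C_k(G), and each recoloring step either stays inside
  a label component or crosses an edge of the contracted graph.  Restricting colorings to
  a subgraph turns a recoloring step into a recoloring step or into no change at all, so
  connectivity in C_k(G) descends to C_k(G').\<close>

definition recol_rel :: "'v set \<Rightarrow> 'v set set \<Rightarrow> nat \<Rightarrow> (('v \<Rightarrow> nat) \<times> ('v \<Rightarrow> nat)) set" where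
  "recol_rel V E k =
     {(\<alpha>, \<beta>). \<alpha> \<in> colorings V E k \<and> \<beta> \<in> colorings V E k \<and> recol_adj V \<alpha> \<beta>}"

definition label_rel ::
    "'v set \<Rightarrow> 'v set set \<Rightarrow> nat \<Rightarrow> 'v set \<Rightarrow> (('v \<Rightarrow> nat) \<times> ('v \<Rightarrow> nat)) set" where
  "label_rel V E k T = {(\<alpha>, \<beta>) \<in> recol_rel V E k. restrict \<alpha> T = restrict \<beta> T}"

definition label_class ::
    "'v set \<Rightarrow> 'v set set \<Rightarrow> nat \<Rightarrow> 'v set \<Rightarrow> ('v \<Rightarrow> nat) \<Rightarrow> ('v \<Rightarrow> nat) set" where
  "label_class V E k T \<gamma> = {\<delta>. (\<gamma>, \<delta>) \<in> (label_rel V E k T)\<^sup>*}"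

lemma recol_adj_sym: "recol_adj V \<alpha> \<beta> \<Longrightarrow> recol_adj V \<beta> \<alpha>"
  unfolding recol_adj_def by (simp add: eq_commute)

lemma sym_label_rel: "sym (label_rel V E k T)"
  by (auto intro!: symI simp: label_rel_def recol_rel_def recol_adj_sym)

lemma label_rel_subset_recol_rel: "label_rel V E k T \<subseteq> recol_rel V E k"
  by (auto simp: label_rel_def)

lemma label_rel_rtrancl_preserves:
  assumes "(\<gamma>, \<delta>) \<in> (label_rel V E k T)\<^sup>*" "\<gamma> \<in> colorings V E k"
  shows "\<delta> \<in> colorings V E k" "restrict \<delta> T = restrict \<gamma> T"
  using assms by (induction rule: rtrancl_induct) (auto simp: label_rel_def recol_rel_def)

lemma self_in_label_class: "\<gamma> \<in> label_class V E k T \<gamma>"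
  by (simp add: label_class_def)

lemma label_rel_rtrancl_within_label_class:
  assumes "(\<delta>, \<epsilon>) \<in> (label_rel V E k T)\<^sup>*" "\<delta> \<in> label_class V E k T \<gamma>"
  shows "(\<delta>, \<epsilon>) \<in>
    {(a, b). a \<in> label_class V E k T \<gamma> \<and> b \<in> label_class V E k T \<gamma> \<and> recol_adj V a b}\<^sup>*"
  using assms
proof (induction rule: rtrancl_induct)
  case (step \<epsilon> \<zeta>)
  have "(\<gamma>, \<epsilon>) \<in> (label_rel V E k T)\<^sup>*"
    using step.prems step.hyps(1) unfolding label_class_def by (blast intro: rtrancl_trans)
  with step.hyps(2) have "\<epsilon> \<in> label_class V E k T \<gamma>" "\<zeta> \<in> label_class V E k T \<gamma>"
    unfolding label_class_def by (blast intro: rtrancl.rtrancl_into_rtrancl)+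
  moreover have "recol_adj V \<epsilon> \<zeta>"
    using step.hyps(2) by (simp add: label_rel_def recol_rel_def)
  ultimately show ?case
    using step.IH[OF step.prems] by (simp add: rtrancl.rtrancl_into_rtrancl)
qed simp

lemma label_connected_set_label_class:
  assumes "\<gamma> \<in> colorings V E k"
  shows "label_connected_set V E k T (label_class V E k T \<gamma>)"
  unfolding label_connected_set_def induces_connected_def
proof (intro conjI ballI)
  show "label_class V E k T \<gamma> \<noteq> {}" using self_in_label_class by blast
  show "label_class V E k T \<gamma> \<subseteq> colorings V E k"
    using label_rel_rtrancl_preserves(1)[OF _ assms] unfolding label_class_def by blast
  show "\<exists>L. \<forall>\<delta>\<in>label_class V E k T \<gamma>. restrict \<delta> T = L"
    using label_rel_rtrancl_preserves(2)[OF _ assms] unfolding label_class_def by blast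
next
  fix \<delta> \<epsilon> assume \<delta>: "\<delta> \<in> label_class V E k T \<gamma>" and \<epsilon>: "\<epsilon> \<in> label_class V E k T \<gamma>"
  have "(\<delta>, \<gamma>) \<in> (label_rel V E k T)\<^sup>*"
    using \<delta> symD[OF sym_rtrancl[OF sym_label_rel]] unfolding label_class_def by blast
  with \<epsilon> have "(\<delta>, \<epsilon>) \<in> (label_rel V E k T)\<^sup>*"
    unfolding label_class_def by (blast intro: rtrancl_trans)
  then show "(\<delta>, \<epsilon>) \<in>
      {(a, b). a \<in> label_class V E k T \<gamma> \<and> b \<in> label_class V E k T \<gamma> \<and> recol_adj V a b}\<^sup>*"
    using \<delta> by (rule label_rel_rtrancl_within_label_class)
qed

lemma label_connected_set_subset_label_class:
  assumes "label_connected_set V E k T S" "\<gamma> \<in> S"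
  shows "S \<subseteq> label_class V E k T \<gamma>"
proof
  fix \<delta> assume "\<delta> \<in> S"
  from assms(1) obtain L where L: "\<forall>\<epsilon>\<in>S. restrict \<epsilon> T = L"
    and S: "S \<subseteq> colorings V E k" and conn: "induces_connected (recol_adj V) S"
    unfolding label_connected_set_def by blast
  have "(\<gamma>, \<delta>) \<in> {(a, b). a \<in> S \<and> b \<in> S \<and> recol_adj V a b}\<^sup>*"
    using conn assms(2) \<open>\<delta> \<in> S\<close> unfolding induces_connected_def by blast
  moreover have "{(a, b). a \<in> S \<and> b \<in> S \<and> recol_adj V a b} \<subseteq> label_rel V E k T"
    using L S by (auto simp: label_rel_def recol_rel_def)
  ultimately show "\<delta> \<in> label_class V E k T \<gamma>"
    unfolding label_class_def using rtrancl_mono by blast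
qed

lemma label_component_eq_label_class:
  assumes "x \<in> label_components V E k T" "\<gamma> \<in> x"
  shows "x = label_class V E k T \<gamma>"
proof -
  have x: "label_connected_set V E k T x"
    and maximal: "\<And>S'. label_connected_set V E k T S' \<Longrightarrow> x \<subseteq> S' \<Longrightarrow> S' = x"
    using assms(1) by (auto simp: label_components_def)
  then have "\<gamma> \<in> colorings V E k"
    using assms(2) by (auto simp: label_connected_set_def)
  then have "label_connected_set V E k T (label_class V E k T \<gamma>)"
    by (rule label_connected_set_label_class)
  moreover have "x \<subseteq> label_class V E k T \<gamma>"
    using x assms(2) by (rule label_connected_set_subset_label_class)
  ultimately show ?thesis using maximal by blast
qed

lemma label_class_in_label_components:
  assumes "\<gamma> \<in> colorings V E k"
  shows "label_class V E k T \<gamma> \<in> label_components V E k T"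
  unfolding label_components_def
proof (intro CollectI conjI allI impI)
  show "label_connected_set V E k T (label_class V E k T \<gamma>)"
    using assms by (rule label_connected_set_label_class)
  fix S' assume S': "label_connected_set V E k T S' \<and> label_class V E k T \<gamma> \<subseteq> S'"
  then have "S' \<subseteq> label_class V E k T \<gamma>"
    using label_connected_set_subset_label_class self_in_label_class by blast
  with S' show "S' = label_class V E k T \<gamma>" by blast
qed

lemma node_of_eq_label_class:
  assumes "\<gamma> \<in> colorings V E k"
  shows "node_of V E k T \<gamma> = label_class V E k T \<gamma>"
  unfolding node_of_def
proof (rule the_equality)
  show "label_class V E k T \<gamma> \<in> label_components V E k T \<and> \<gamma> \<in> label_class V E k T \<gamma>"
    using label_class_in_label_components[OF assms] self_in_label_class by blast
next
  show "\<And>x. x \<in> label_components V E k T \<and> \<gamma> \<in> x \<Longrightarrow> x = label_class V E k T \<gamma>"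
    using label_component_eq_label_class by blast
qed

lemma label_component_recol_connected:
  assumes "x \<in> label_components V E k T" "\<gamma> \<in> x" "\<delta> \<in> x"
  shows "(\<gamma>, \<delta>) \<in> (recol_rel V E k)\<^sup>*"
proof -
  have "(\<gamma>, \<delta>) \<in> (label_rel V E k T)\<^sup>*"
    using assms(3) label_component_eq_label_class[OF assms(1,2)] by (simp add: label_class_def)
  then show ?thesis using rtrancl_mono[OF label_rel_subset_recol_rel] by blast
qed

lemma same_component_recol_connected:
  assumes "(x, y) \<in> {(a, b). contracted_adj V E k T a b}\<^sup>*" "x \<in> label_components V E k T"
    and "\<gamma> \<in> x" "\<delta> \<in> y"
  shows "(\<gamma>, \<delta>) \<in> (recol_rel V E k)\<^sup>*"
  using assms(1,4)
proof (induction arbitrary: \<delta> rule: rtrancl_induct)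
  case base
  then show ?case using label_component_recol_connected assms(2,3) by blast
next
  case (step y z)
  then obtain \<epsilon> \<zeta> where "\<epsilon> \<in> y" "\<zeta> \<in> z" "recol_adj V \<epsilon> \<zeta>"
    and y: "y \<in> label_components V E k T" and z: "z \<in> label_components V E k T"
    unfolding contracted_adj_def by auto
  then have "(\<epsilon>, \<zeta>) \<in> recol_rel V E k"
    by (auto simp: recol_rel_def label_components_def label_connected_set_def)
  with step.IH[OF \<open>\<epsilon> \<in> y\<close>] have "(\<gamma>, \<zeta>) \<in> (recol_rel V E k)\<^sup>*"
    by (rule rtrancl_into_rtrancl)
  moreover have "(\<zeta>, \<delta>) \<in> (recol_rel V E k)\<^sup>*"
    using label_component_recol_connected[OF z \<open>\<zeta> \<in> z\<close> step.prems] .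
  ultimately show ?case by (rule rtrancl_trans)
qed

lemma recol_connected_same_component:
  assumes "(\<gamma>, \<delta>) \<in> (recol_rel V E k)\<^sup>*"
  shows "same_component V E k T (label_class V E k T \<gamma>) (label_class V E k T \<delta>)"
  using assms
proof (induction rule: rtrancl_induct)
  case base
  then show ?case by (simp add: same_component_def)
next
  case (step \<delta> \<epsilon>)
  then have \<delta>: "\<delta> \<in> colorings V E k" and \<epsilon>: "\<epsilon> \<in> colorings V E k"
    and "recol_adj V \<delta> \<epsilon>" by (auto simp: recol_rel_def)
  then have "label_class V E k T \<delta> = label_class V E k T \<epsilon> \<or>
      contracted_adj V E k T (label_class V E k T \<delta>) (label_class V E k T \<epsilon>)"
    using label_class_in_label_components[OF \<delta>] label_class_in_label_components[OF \<epsilon>]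
      self_in_label_class unfolding contracted_adj_def by blast
  with step.IH show ?case
    unfolding same_component_def by (auto simp: rtrancl.rtrancl_into_rtrancl)
qed

lemma same_component_node_of_iff:
  assumes "\<gamma> \<in> colorings V E k" "\<delta> \<in> colorings V E k"
  shows "same_component V E k T (node_of V E k T \<gamma>) (node_of V E k T \<delta>) \<longleftrightarrow>
    (\<gamma>, \<delta>) \<in> (recol_rel V E k)\<^sup>*"
proof
  assume "same_component V E k T (node_of V E k T \<gamma>) (node_of V E k T \<delta>)"
  then have "(label_class V E k T \<gamma>, label_class V E k T \<delta>)
      \<in> {(a, b). contracted_adj V E k T a b}\<^sup>*"
    by (simp add: same_component_def node_of_eq_label_class assms)
  then show "(\<gamma>, \<delta>) \<in> (recol_rel V E k)\<^sup>*"
    using same_component_recol_connected label_class_in_label_components[OF assms(1)]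
      self_in_label_class by metis
qed (simp add: node_of_eq_label_class assms recol_connected_same_component)

lemma restrict_in_colorings:
  assumes "subgraph V' E' V E" "\<gamma> \<in> colorings V E k"
  shows "restrict \<gamma> V' \<in> colorings V' E' k"
proof -
  have "V' \<subseteq> V" "E' \<subseteq> E" "\<forall>e\<in>E'. e \<subseteq> V'"
    using assms(1) unfolding subgraph_def graph_def by auto
  with assms(2) show ?thesis by (auto simp: colorings_def PiE_def Pi_def)
qed

lemma restrict_recol_adj:
  assumes "finite V" "V' \<subseteq> V" "recol_adj V \<gamma> \<delta>"
  shows "restrict \<gamma> V' = restrict \<delta> V' \<or> recol_adj V' (restrict \<gamma> V') (restrict \<delta> V')"
proof -
  let ?D' = "{v \<in> V'. \<gamma> v \<noteq> \<delta> v}"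
  have "card ?D' \<le> card {v \<in> V. \<gamma> v \<noteq> \<delta> v}"
    using assms(1,2) by (intro card_mono) auto
  with assms(3) have "card ?D' = 0 \<or> card ?D' = 1"
    unfolding recol_adj_def by linarith
  moreover have "finite ?D'" using assms(1,2) by (auto intro: finite_subset)
  moreover have "{v \<in> V'. restrict \<gamma> V' v \<noteq> restrict \<delta> V' v} = ?D'" by auto
  ultimately show ?thesis
    unfolding recol_adj_def by (auto simp: restrict_def fun_eq_iff)
qed

lemma restrict_recol_connected:
  assumes "subgraph V' E' V E" "(\<gamma>, \<delta>) \<in> (recol_rel V E k)\<^sup>*"
  shows "(restrict \<gamma> V', restrict \<delta> V') \<in> (recol_rel V' E' k)\<^sup>*"
  using assms(2)
proof (induction rule: rtrancl_induct)
  case (step \<delta> \<epsilon>)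
  then have \<delta>: "\<delta> \<in> colorings V E k" and \<epsilon>: "\<epsilon> \<in> colorings V E k"
    and adj: "recol_adj V \<delta> \<epsilon>" by (auto simp: recol_rel_def)
  have "finite V" "V' \<subseteq> V" using assms(1) by (auto simp: subgraph_def graph_def)
  from restrict_recol_adj[OF this adj] show ?case
  proof
    assume "recol_adj V' (restrict \<delta> V') (restrict \<epsilon> V')"
    then have "(restrict \<delta> V', restrict \<epsilon> V') \<in> recol_rel V' E' k"
      using restrict_in_colorings[OF assms(1) \<delta>] restrict_in_colorings[OF assms(1) \<epsilon>]
      by (simp add: recol_rel_def)
    with step.IH show ?thesis by (rule rtrancl_into_rtrancl)
  qed (use step.IH in simp)
qed simp

theorem proposition9:
  fixes V V' :: "'v set" and E E' :: "'v set set" and k :: nat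
    and T T' :: "'v set" and \<alpha> \<beta> :: "'v \<Rightarrow> nat"
  assumes "subgraph V' E' V E"
    and "\<alpha> \<in> colorings V E k" and "\<beta> \<in> colorings V E k"
    and "T' \<subseteq> V'" and "T \<subseteq> V"
    and "\<not> same_component V' E' k T'
            (node_of V' E' k T' (restrict \<alpha> V')) (node_of V' E' k T' (restrict \<beta> V'))"
  shows "\<not> same_component V E k T (node_of V E k T \<alpha>) (node_of V E k T \<beta>)"
proof
  assume "same_component V E k T (node_of V E k T \<alpha>) (node_of V E k T \<beta>)"
  then have "(\<alpha>, \<beta>) \<in> (recol_rel V E k)\<^sup>*"
    using same_component_node_of_iff assms(2,3) by blast
  then have "(restrict \<alpha> V', restrict \<beta> V') \<in> (recol_rel V' E' k)\<^sup>*"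
    using restrict_recol_connected assms(1) by blast
  then show False
    using assms(6) same_component_node_of_iff restrict_in_colorings assms(1-3) by blast
qed

end
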